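(* Consider four bosonic modes labelled $1,2,3,4$, and a beam-splitter network $\hat B_{\text{network}}=\hat B_{j_4k_4}\hat B_{j_3k_3}\hat B_{j_2k_2}\hat B_{j_1k_1}$ consisting of four balanced beam splitters, where $j_i\neq k_i\in\{1,2,3,4\}$ for each $i$ and the beam splitter $\hat B_{j_1k_1}$ acts first on the state, then $\hat B_{j_2k_2}$, and so on. Then $\hat B_{\text{network}}$ is a real balanced four-splitter if and only if all of the following hold: (1) each mode is acted on by exactly two of the four beam splitters; (2) all modes interact with a first beam splitter before any mode interacts with a second one (i.e., in the order of application, no beam splitter acts on a mode that has already been acted on while some mode has not yet been acted on by any beam splitter); (3) no two of the beam splitters act on the same (unordered) pair of modes.
   Context: For modes with annihilation operators $\hat a_j$ and quadratures $\hat q_j=(\hat a_j+\hat a_j^\dagger)/\sqrt2$, $\hat p_j=-i(\hat a_j-\hat a_j^\dagger)/\sqrt2$, the balanced beam splitter from mode $j$ to mode $k$ is $\hat B_{jk}=e^{\frac{\pi}{4}(\hat a_j\hat a_k^\dagger-\hat a_j^\dagger\hat a_k)}$ (note $\hat B_{kj}=\hat B_{jk}^\dagger$, so each beam splitter may point in either direction). A passive linear-optical unitary $\hat U$ on $N$ modes has matrix $\mathbf U\in\mathrm U(N)$ defined by $\hat U^\dagger\hat{\mathbf a}\hat U=\mathbf U\hat{\mathbf a}$; for $\hat B_{jk}$ this matrix equals the identity except on rows/columns $(j,k)$, where it is $\tfrac1{\sqrt2}\begin{bmatrix}1&-1\\1&1\end{bmatrix}$, and the matrix of the network is the product $\mathbf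 R_{j_4k_4}\mathbf R_{j_3k_3}\mathbf R_{j_2k_2}\mathbf R_{j_1k_1}$. A real balanced four-splitter is a linear-optical unitary on four modes whose matrix is real orthogonal with all entries of equal magnitude (hence $\pm\tfrac12$). *)

theory Defs
  imports "HOL-Analysis.Analysis" "HOL-Library.Numeral_Type"
begin

text \<open>Modes are the four elements of the numeral type 4 (standing for modes 1,2,3,4).\<close>

definition bs_matrix :: "4 \<Rightarrow> 4 \<Rightarrow> real^4^4" where
  "bs_matrix j k = (\<chi> r c.
     if r = j \<and> c = j then 1 / sqrt 2
     else if r = j \<and> c = k then - 1 / sqrt 2
     else if r = k \<and> c = j then 1 / sqrt 2
     else if r = k \<and> c = k then 1 / sqrt 2
     else if r = c then 1 else 0)"

definition network_matrix :: "(nat \<Rightarrow> 4) \<Rightarrow> (nat \<Rightarrow> 4) \<Rightarrow> real^4^4" where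
  "network_matrix j k =
     bs_matrix (j 4) (k 4) ** bs_matrix (j 3) (k 3) ** bs_matrix (j 2) (k 2) ** bs_matrix (j 1) (k 1)"

definition real_balanced_four_splitter :: "real^4^4 \<Rightarrow> bool" where
  "real_balanced_four_splitter M \<longleftrightarrow>
     orthogonal_matrix M \<and> (\<forall>a b c d. \<bar>M $ a $ b\<bar> = \<bar>M $ c $ d\<bar>)"

end

theory Submission
  imports Defs
begin

text \<open>A balanced beam splitter on modes j, k only moves amplitude between j and k, and only
  if one of them already carries some. Hence column c of the network matrix vanishes outside
  the set of modes reached from c by successively joining each pair that meets the current
  set. A balanced splitter has no zero entry, so from every c all four modes must be reached,
  and likewise for the reversed network, whose matrix is the transpose. This rules out
  overlapping first two or last two pairs, and a third pair repeating one of the first two.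
  Conversely, two layers of complementary pairs with different pairings send a basis vector
  to amplitudes of modulus 1/sqrt 2 on two modes and then 1/2 on all four.\<close>

section \<open>Balanced beam splitters\<close>

lemma bs_matrix_mult_vec_nth:
  assumes "j \<noteq> k"
  shows "(bs_matrix j k *v v) $ r =
    (if r = j then (v $ j - v $ k) / sqrt 2 else if r = k then (v $ j + v $ k) / sqrt 2 else v $ r)"
  using exhaust_4[of j] exhaust_4[of k] exhaust_4[of r] assms
  by (auto simp: matrix_vector_mult_def sum_4 bs_matrix_def diff_divide_distrib add_divide_distrib)

lemma transpose_bs_matrix:
  assumes "j \<noteq> k"
  shows "transpose (bs_matrix j k) = bs_matrix k j"
proof -
  have "bs_matrix j k $ c $ r = bs_matrix k j $ r $ c" for r c
    using assms by (cases "r = j"; cases "r = k"; cases "c = j"; cases "c = k"; simp add: bs_matrix_def)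
  then show ?thesis
    by (simp add: vec_eq_iff transpose_def)
qed

lemma orthogonal_matrix_bs_matrix:
  assumes "j \<noteq> k"
  shows "orthogonal_matrix (bs_matrix j k)"
  unfolding orthogonal_matrix transpose_bs_matrix[OF assms] vec_eq_iff
proof (intro allI)
  fix r c
  have "(bs_matrix k j ** bs_matrix j k) $ r $ c = (bs_matrix k j *v column c (bs_matrix j k)) $ r"
    by (simp add: matrix_matrix_mult_def matrix_vector_mult_def column_def)
  also have "\<dots> = mat 1 $ r $ c"
    unfolding bs_matrix_mult_vec_nth[OF assms[symmetric]] using assms
    by (cases "r = j"; cases "r = k"; cases "c = j"; cases "c = k";
        simp add: column_def bs_matrix_def mat_def field_simps)
  finally show "(bs_matrix k j ** bs_matrix j k) $ r $ c = mat 1 $ r $ c" .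
qed

lemma bs_matrix_mult_vec_outside: "j \<noteq> k \<Longrightarrow> x \<notin> {j, k} \<Longrightarrow> (bs_matrix j k *v v) $ x = v $ x"
  by (simp add: bs_matrix_mult_vec_nth)

lemma bs_matrix_mult_vec_fixed: "j \<noteq> k \<Longrightarrow> v $ j = 0 \<Longrightarrow> v $ k = 0 \<Longrightarrow> bs_matrix j k *v v = v"
  by (simp add: vec_eq_iff bs_matrix_mult_vec_nth)

lemma abs_bs_matrix_mult_vec_nth:
  assumes "j \<noteq> k" "v $ j * v $ k = 0" "x \<in> {j, k}"
  shows "\<bar>(bs_matrix j k *v v) $ x\<bar> = (\<bar>v $ j\<bar> + \<bar>v $ k\<bar>) / sqrt 2"
  using assms by (auto simp: bs_matrix_mult_vec_nth)

lemma abs_bs_matrix_mult_axis: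
  assumes "j \<noteq> k" "c \<in> {j, k}"
  shows "\<bar>(bs_matrix j k *v axis c 1) $ x\<bar> = (if x \<in> {j, k} then 1 / sqrt 2 else 0)"
  using assms abs_bs_matrix_mult_vec_nth[OF assms(1), of "axis c 1" x]
  by (auto simp: axis_def bs_matrix_mult_vec_outside)

lemma network_matrix_nth:
  "network_matrix j k $ r $ c =
    (bs_matrix (j 4) (k 4) *v (bs_matrix (j 3) (k 3) *v
      (bs_matrix (j 2) (k 2) *v (bs_matrix (j 1) (k 1) *v axis c 1)))) $ r"
proof -
  have "M $ r $ c = (M *v axis c 1) $ r" for M :: "real^4^4"
    by (simp add: matrix_vector_mult_basis column_def)
  then show ?thesis
    unfolding network_matrix_def by (simp only: matrix_vector_mul_assoc matrix_mul_assoc)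
qed

lemma transpose_network_matrix:
  assumes "\<forall>i\<in>{1..4::nat}. j i \<noteq> k i"
  shows "transpose (network_matrix j k) = network_matrix (\<lambda>i. k (5 - i)) (\<lambda>i. j (5 - i))"
proof -
  have "j i \<noteq> k i" if "i \<in> {1, 2, 3, 4}" for i
    using assms that by auto
  then show ?thesis
    by (simp add: network_matrix_def matrix_transpose_mul transpose_bs_matrix matrix_mul_assoc)
qed

lemma orthogonal_matrix_network_matrix:
  assumes "\<forall>i\<in>{1..4::nat}. j i \<noteq> k i"
  shows "orthogonal_matrix (network_matrix j k)"
  using assms unfolding network_matrix_def
  by (auto intro!: orthogonal_matrix_mul orthogonal_matrix_bs_matrix)

lemma real_balanced_four_splitter_transpose:
  "real_balanced_four_splitter (transpose M) \<longleftrightarrow> real_balanced_four_splitter M"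
proof -
  have "\<bar>transpose M $ a $ b\<bar> = \<bar>M $ b $ a\<bar>" for a b
    by (simp add: transpose_def)
  then show ?thesis
    unfolding real_balanced_four_splitter_def orthogonal_matrix_transpose by auto
qed

lemma real_balanced_four_splitter_nonzero:
  assumes "real_balanced_four_splitter M"
  shows "M $ r $ c \<noteq> 0"
proof
  assume "M $ r $ c = 0"
  moreover have "\<bar>M $ i $ c\<bar> = \<bar>M $ r $ c\<bar>" for i
    using assms unfolding real_balanced_four_splitter_def by blast
  ultimately have "column c M = 0"
    by (simp add: vec_eq_iff column_def)
  moreover have "norm (column c M) = 1"
    using assms by (simp add: real_balanced_four_splitter_def orthogonal_matrix_orthonormal_columns)
  ultimately show False
    by simp
qed

section \<open>Propagation of the support\<close>

definition spread :: "'a set \<Rightarrow> 'a set \<Rightarrow> 'a set" where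
  "spread S e = (if S \<inter> e = {} then S else S \<union> e)"

lemma spread_eq_self: "e \<subseteq> S \<or> S \<inter> e = {} \<Longrightarrow> spread S e = S"
  by (auto simp: spread_def)

lemma card_spread_le:
  assumes "finite S"
  shows "card (spread S {a, b}) \<le> card S + 1"
proof (cases "S \<inter> {a, b} = {}")
  case False
  then have "S \<union> {a, b} = insert a S \<or> S \<union> {a, b} = insert b S"
    by auto
  then show ?thesis
    using False assms by (auto simp: spread_def card_insert_if)
qed (simp add: spread_def)

lemma bs_matrix_mult_vec_support:
  assumes "j \<noteq> k" "{x. v $ x \<noteq> 0} \<subseteq> S"
  shows "{x. (bs_matrix j k *v v) $ x \<noteq> 0} \<subseteq> spread S {j, k}"
proof (cases "S \<inter> {j, k} = {}")
  case True
  then have "bs_matrix j k *v v = v"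
    using assms by (intro bs_matrix_mult_vec_fixed) auto
  then show ?thesis
    using assms True by (simp add: spread_def)
next
  case False
  have "(bs_matrix j k *v v) $ x = v $ x" if "x \<notin> {j, k}" for x
    using assms(1) that by (rule bs_matrix_mult_vec_outside)
  then show ?thesis
    using assms(2) False by (auto simp: spread_def)
qed

definition network_spread :: "(nat \<Rightarrow> 4) \<Rightarrow> (nat \<Rightarrow> 4) \<Rightarrow> 4 \<Rightarrow> 4 set" where
  "network_spread j k c =
     spread (spread (spread (spread {c} {j 1, k 1}) {j 2, k 2}) {j 3, k 3}) {j 4, k 4}"

lemma network_matrix_eq_0_outside_spread:
  assumes "\<forall>i\<in>{1..4::nat}. j i \<noteq> k i" "r \<notin> network_spread j k c"
  shows "network_matrix j k $ r $ c = 0"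
proof -
  have "j 1 \<noteq> k 1" "j 2 \<noteq> k 2" "j 3 \<noteq> k 3" "j 4 \<noteq> k 4"
    using assms(1) by auto
  moreover have "{x. axis c 1 $ x \<noteq> (0::real)} \<subseteq> {c}"
    by (auto simp: axis_def)
  ultimately have "{x. network_matrix j k $ x $ c \<noteq> 0} \<subseteq> network_spread j k c"
    unfolding network_matrix_nth network_spread_def by (intro bs_matrix_mult_vec_support)
  then show ?thesis
    using assms(2) by blast
qed

lemma balanced_network_spread_eq_UNIV:
  assumes "\<forall>i\<in>{1..4::nat}. j i \<noteq> k i" "real_balanced_four_splitter (network_matrix j k)"
  shows "network_spread j k c = UNIV"
  using network_matrix_eq_0_outside_spread[OF assms(1)] real_balanced_four_splitter_nonzero[OF assms(2)]
  by blast

section \<open>Necessity\<close>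

lemma disjoint_pair_eq_Compl:
  fixes a b c d :: 4
  assumes "a \<noteq> b" "c \<noteq> d" "{a, b} \<inter> {c, d} = {}"
  shows "{c, d} = - {a, b}"
proof -
  have "card ({a, b} \<union> {c, d}) = CARD(4)"
    using assms by (simp add: card_Un_disjoint)
  then have "{a, b} \<union> {c, d} = UNIV"
    by (simp add: card_eq_UNIV_imp_eq_UNIV)
  then show ?thesis
    using assms(3) by auto
qed

lemma network_spread_ne_UNIV_if_first_pairs_meet:
  assumes "{j 1, k 1} \<inter> {j 2, k 2} \<noteq> {}"
  obtains c where "network_spread j k c \<noteq> UNIV"
proof -
  have "card ({j 1, k 1} \<union> {j 2, k 2}) \<le> 3"
    using assms by (auto simp: card_insert_if)
  then have "{j 1, k 1} \<union> {j 2, k 2} \<noteq> UNIV"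
    by force
  then obtain c where c: "c \<notin> {j 1, k 1} \<union> {j 2, k 2}"
    by blast
  then have "network_spread j k c = spread (spread {c} {j 3, k 3}) {j 4, k 4}"
    by (simp add: network_spread_def spread_eq_self)
  moreover have "card (spread (spread {c} {j 3, k 3}) {j 4, k 4}) \<le> 3"
    using card_spread_le[of "{c}" "j 3" "k 3"] card_spread_le[of "spread {c} {j 3, k 3}" "j 4" "k 4"]
    by simp
  ultimately show thesis
    using that[of c] by force
qed

lemma balanced_network_first_pairs_disjoint:
  assumes "\<forall>i\<in>{1..4::nat}. j i \<noteq> k i" "real_balanced_four_splitter (network_matrix j k)"
  shows "{j 1, k 1} \<inter> {j 2, k 2} = {}"
proof (rule ccontr)
  assume "{j 1, k 1} \<inter> {j 2, k 2} \<noteq> {}"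
  then obtain c where "network_spread j k c \<noteq> UNIV"
    by (rule network_spread_ne_UNIV_if_first_pairs_meet)
  then show False
    using balanced_network_spread_eq_UNIV[OF assms] by blast
qed

lemma balanced_network_last_pairs_disjoint:
  assumes distinct: "\<forall>i\<in>{1..4::nat}. j i \<noteq> k i"
    and balanced: "real_balanced_four_splitter (network_matrix j k)"
  shows "{j 3, k 3} \<inter> {j 4, k 4} = {}"
proof -
  let ?j = "\<lambda>i. k (5 - i)" and ?k = "\<lambda>i. j (5 - i)"
  have "\<forall>i\<in>{1..4::nat}. ?j i \<noteq> ?k i"
  proof
    fix i :: nat
    assume "i \<in> {1..4}"
    then have "5 - i \<in> {1..4}"
      by auto
    then show "?j i \<noteq> ?k i"
      using distinct by metis
  qed
  moreover have "real_balanced_four_splitter (network_matrix ?j ?k)"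
    using balanced by (simp add: transpose_network_matrix[OF distinct, symmetric]
        real_balanced_four_splitter_transpose)
  ultimately have "{?j 1, ?k 1} \<inter> {?j 2, ?k 2} = {}"
    by (rule balanced_network_first_pairs_disjoint)
  then show ?thesis
    by auto
qed

lemma balanced_network_third_pair_differs:
  assumes distinct: "\<forall>i\<in>{1..4::nat}. j i \<noteq> k i"
    and balanced: "real_balanced_four_splitter (network_matrix j k)"
    and disjoint: "{j 1, k 1} \<inter> {j 2, k 2} = {}" "{j 3, k 3} \<inter> {j 4, k 4} = {}"
  shows "{j 3, k 3} \<noteq> {j 1, k 1} \<and> {j 3, k 3} \<noteq> {j 2, k 2}"
proof (rule ccontr)
  assume "\<not> ({j 3, k 3} \<noteq> {j 1, k 1} \<and> {j 3, k 3} \<noteq> {j 2, k 2})"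
  then have repeated: "{j 3, k 3} = {j 1, k 1} \<or> {j 3, k 3} = {j 2, k 2}"
    by blast
  have "j 1 \<noteq> k 1" "j 2 \<noteq> k 2" "j 3 \<noteq> k 3" "j 4 \<noteq> k 4"
    using distinct by auto
  note compl = disjoint_pair_eq_Compl[OF this(1,2) disjoint(1)]
    disjoint_pair_eq_Compl[OF this(3,4) disjoint(2)]
  have "spread {j 1} {j 1, k 1} = {j 1, k 1}"
    by (auto simp: spread_def)
  moreover have "spread {j 1, k 1} {j 2, k 2} = {j 1, k 1}"
    using disjoint(1) by (simp add: spread_eq_self)
  moreover have "{j 3, k 3} = {j 1, k 1} \<or> {j 3, k 3} = - {j 1, k 1}"
    using repeated compl(1) by simp
  then have "spread {j 1, k 1} {j 3, k 3} = {j 1, k 1} \<and> spread {j 1, k 1} {j 4, k 4} = {j 1, k 1}"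
    using compl(2) by (elim disjE) (simp_all add: spread_eq_self)
  ultimately have "network_spread j k (j 1) = {j 1, k 1}"
    by (simp add: network_spread_def)
  moreover have "card {j 1, k 1} < CARD(4)"
    by (simp add: card_insert_if)
  then have "{j 1, k 1} \<noteq> UNIV"
    by force
  ultimately show False
    using balanced_network_spread_eq_UNIV[OF distinct balanced] by blast
qed

definition crossed_layers :: "(nat \<Rightarrow> 4) \<Rightarrow> (nat \<Rightarrow> 4) \<Rightarrow> bool" where
  "crossed_layers j k \<longleftrightarrow>
     {j 1, k 1} \<inter> {j 2, k 2} = {} \<and> {j 3, k 3} \<inter> {j 4, k 4} = {} \<and>
     {j 3, k 3} \<noteq> {j 1, k 1} \<and> {j 3, k 3} \<noteq> {j 2, k 2}"

lemma balanced_imp_crossed_layers: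
  assumes "\<forall>i\<in>{1..4::nat}. j i \<noteq> k i" "real_balanced_four_splitter (network_matrix j k)"
  shows "crossed_layers j k"
  using balanced_network_first_pairs_disjoint[OF assms] balanced_network_last_pairs_disjoint[OF assms]
    balanced_network_third_pair_differs[OF assms]
  unfolding crossed_layers_def by blast

section \<open>Sufficiency\<close>

lemma pair_meets_once:
  fixes a b :: 4
  assumes "card F = 2" "a \<noteq> b" "{a, b} \<noteq> F" "{a, b} \<noteq> - F"
  shows "a \<in> F \<longleftrightarrow> b \<notin> F"
proof -
  have "card {a, b} = card F" "card {a, b} = card (- F)"
    using assms(1,2) by (simp_all add: Compl_eq_Diff_UNIV card_Diff_subset)
  then show ?thesis
    using card_subset_eq[of F "{a, b}"] card_subset_eq[of "- F" "{a, b}"] assms(3,4) by auto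
qed

lemma abs_first_layer_axis:
  assumes "a \<noteq> b" "c \<noteq> d" "{c, d} = - {a, b}"
  obtains F where "F = {a, b} \<or> F = {c, d}"
    "\<And>x. \<bar>(bs_matrix c d *v (bs_matrix a b *v axis i 1)) $ x\<bar> = (if x \<in> F then 1 / sqrt 2 else 0)"
proof (cases "i \<in> {a, b}")
  case True
  have "c \<notin> {a, b}" "d \<notin> {a, b}"
    using assms(3) by blast+
  then have "(bs_matrix a b *v axis i 1) $ c = 0" "(bs_matrix a b *v axis i 1) $ d = 0"
    using abs_bs_matrix_mult_axis[OF assms(1) True] by (metis abs_eq_0)+
  then have "bs_matrix c d *v (bs_matrix a b *v axis i 1) = bs_matrix a b *v axis i 1"
    by (rule bs_matrix_mult_vec_fixed[OF assms(2)])
  then show thesis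
    using that[of "{a, b}"] abs_bs_matrix_mult_axis[OF assms(1) True] by presburger
next
  case False
  then have "i \<in> {c, d}" "i \<noteq> a" "i \<noteq> b"
    using assms(3) by blast+
  then have "bs_matrix a b *v axis i 1 = axis i 1"
    by (intro bs_matrix_mult_vec_fixed[OF assms(1)]) (simp_all add: axis_def)
  then show thesis
    using that[of "{c, d}"] abs_bs_matrix_mult_axis[OF assms(2) \<open>i \<in> {c, d}\<close>] by presburger
qed

lemma abs_second_layer:
  assumes "a \<noteq> b" "c \<noteq> d" "{a, b} \<inter> {c, d} = {}"
    and "v $ a * v $ b = 0" "\<bar>v $ a\<bar> + \<bar>v $ b\<bar> = s"
    and "v $ c * v $ d = 0" "\<bar>v $ c\<bar> + \<bar>v $ d\<bar> = s"
    and "r \<in> {a, b, c, d}"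
  shows "\<bar>(bs_matrix c d *v (bs_matrix a b *v v)) $ r\<bar> = s / sqrt 2"
proof -
  let ?w = "bs_matrix a b *v v"
  consider "r \<in> {a, b}" "r \<notin> {c, d}" | "r \<in> {c, d}"
    using assms(3,8) by blast
  then show ?thesis
  proof cases
    case 1
    then have "(bs_matrix c d *v ?w) $ r = ?w $ r"
      using assms(2) by (intro bs_matrix_mult_vec_outside)
    then show ?thesis
      using abs_bs_matrix_mult_vec_nth[OF assms(1,4) 1(1)] assms(5) by (simp only:)
  next
    case 2
    have "c \<notin> {a, b}" "d \<notin> {a, b}"
      using assms(3) by blast+
    then have "?w $ c = v $ c" "?w $ d = v $ d"
      by (simp_all add: bs_matrix_mult_vec_outside[OF assms(1)])
    then show ?thesis
      using abs_bs_matrix_mult_vec_nth[OF assms(2) _ 2, of ?w] assms(6,7) by (simp only:)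
  qed
qed

lemma crossed_layers_abs_network_matrix_nth:
  assumes "\<forall>i\<in>{1..4::nat}. j i \<noteq> k i" "crossed_layers j k"
  shows "\<bar>network_matrix j k $ r $ c\<bar> = 1 / 2"
proof -
  have d: "j 1 \<noteq> k 1" "j 2 \<noteq> k 2" "j 3 \<noteq> k 3" "j 4 \<noteq> k 4"
    using assms(1) by auto
  have disjoint: "{j 1, k 1} \<inter> {j 2, k 2} = {}" "{j 3, k 3} \<inter> {j 4, k 4} = {}"
    and new: "{j 3, k 3} \<noteq> {j 1, k 1}" "{j 3, k 3} \<noteq> {j 2, k 2}"
    using assms(2) unfolding crossed_layers_def by auto
  note compl = disjoint_pair_eq_Compl[OF d(1,2) disjoint(1)]
    disjoint_pair_eq_Compl[OF d(3,4) disjoint(2)]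
  let ?v = "bs_matrix (j 2) (k 2) *v (bs_matrix (j 1) (k 1) *v axis c 1)"
  obtain F where F: "F = {j 1, k 1} \<or> F = {j 2, k 2}"
    and v: "\<And>x. \<bar>?v $ x\<bar> = (if x \<in> F then 1 / sqrt 2 else 0)"
    using abs_first_layer_axis[OF d(1,2) compl(1)] by blast
  have "card F = 2"
    using F d(1,2) by auto
  moreover have "{j 3, k 3} \<noteq> F" "{j 3, k 3} \<noteq> - F" "{j 4, k 4} \<noteq> F" "{j 4, k 4} \<noteq> - F"
    using F new compl by auto
  ultimately have "j 3 \<in> F \<longleftrightarrow> k 3 \<notin> F" "j 4 \<in> F \<longleftrightarrow> k 4 \<notin> F"
    using d(3,4) by (simp_all add: pair_meets_once)
  then have "?v $ j 3 * ?v $ k 3 = 0" "\<bar>?v $ j 3\<bar> + \<bar>?v $ k 3\<bar> = 1 / sqrt 2"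
    "?v $ j 4 * ?v $ k 4 = 0" "\<bar>?v $ j 4\<bar> + \<bar>?v $ k 4\<bar> = 1 / sqrt 2"
    using v[of "j 3"] v[of "k 3"] v[of "j 4"] v[of "k 4"] by (auto split: if_splits)
  moreover have "r \<in> {j 3, k 3, j 4, k 4}"
    using compl(2) by auto
  ultimately have "\<bar>network_matrix j k $ r $ c\<bar> = 1 / sqrt 2 / sqrt 2"
    unfolding network_matrix_nth by (rule abs_second_layer[OF d(3,4) disjoint(2)])
  then show ?thesis
    by simp
qed

lemma crossed_layers_imp_balanced:
  assumes "\<forall>i\<in>{1..4::nat}. j i \<noteq> k i" "crossed_layers j k"
  shows "real_balanced_four_splitter (network_matrix j k)"
  unfolding real_balanced_four_splitter_def crossed_layers_abs_network_matrix_nth[OF assms]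
  using orthogonal_matrix_network_matrix[OF assms(1)] by simp

section \<open>The combinatorial conditions\<close>

lemma ball_atLeastAtMost_1_4: "(\<forall>i\<in>{1..4::nat}. P i) \<longleftrightarrow> P 1 \<and> P 2 \<and> P 3 \<and> P 4"
proof -
  have "{1..4::nat} = {1, 2, 3, 4}"
    by auto
  then show ?thesis
    by simp
qed

lemma atLeastLessThan_1_upto_4:
  "{1..<1::nat} = {}" "{1..<2::nat} = {1}" "{1..<3::nat} = {1, 2}" "{1..<4::nat} = {1, 2, 3}"
  by auto

lemma card_filter_atLeastAtMost_1_4:
  "card {i\<in>{1..4::nat}. P i} = of_bool (P 1) + of_bool (P 2) + of_bool (P 3) + of_bool (P 4)"
proof -
  have "card {i\<in>{1..4::nat}. P i} = (\<Sum>i\<in>{1..4::nat}. if P i then 1 else 0)"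
    unfolding card_eq_sum by (rule sum.inter_filter) simp
  also have "\<dots> = (\<Sum>i\<in>{1, 2, 3, 4::nat}. if P i then 1 else 0)"
    by (rule sum.cong) auto
  finally show ?thesis
    by simp
qed

lemma conditions_imp_crossed_layers:
  fixes j k :: "nat \<Rightarrow> 4"
  assumes distinct: "\<forall>i\<in>{1..4::nat}. j i \<noteq> k i"
    and twice: "\<forall>m::4. card {i\<in>{1..4::nat}. m = j i \<or> m = k i} = 2"
    and layered: "\<forall>i\<in>{1..4::nat}. (\<exists>i'\<in>{1..<i}. {j i, k i} \<inter> {j i', k i'} \<noteq> {}) \<longrightarrow>
        (\<forall>m::4. \<exists>i'\<in>{1..<i}. m = j i' \<or> m = k i')"
    and new: "\<forall>i\<in>{1..4::nat}. \<forall>i'\<in>{1..4::nat}. i \<noteq> i' \<longrightarrow> {j i, k i} \<noteq> {j i', k i'}"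
  shows "crossed_layers j k"
proof -
  have d: "j 1 \<noteq> k 1" "j 2 \<noteq> k 2"
    using distinct by auto
  have "card {j 1, k 1} < CARD(4)"
    by (simp add: card_insert_if)
  then have "{j 1, k 1} \<noteq> UNIV"
    by force
  have disjoint12: "{j 1, k 1} \<inter> {j 2, k 2} = {}"
  proof (rule ccontr)
    assume "{j 1, k 1} \<inter> {j 2, k 2} \<noteq> {}"
    then have "\<forall>m::4. m = j 1 \<or> m = k 1"
      using bspec[OF layered, of 2] unfolding atLeastLessThan_1_upto_4 by auto
    with \<open>{j 1, k 1} \<noteq> UNIV\<close> show False
      by blast
  qed
  have cover: "m \<in> {j 1, k 1} \<or> m \<in> {j 2, k 2}" for m
    using disjoint_pair_eq_Compl[OF d disjoint12] by blast
  have "{j 3, k 3} \<inter> {j 4, k 4} = {}"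
  proof (rule ccontr)
    assume "{j 3, k 3} \<inter> {j 4, k 4} \<noteq> {}"
    then obtain m where "m \<in> {j 3, k 3}" "m \<in> {j 4, k 4}"
      by blast
    then have "card {i\<in>{1..4::nat}. m = j i \<or> m = k i} \<ge> 3"
      using cover[of m] unfolding card_filter_atLeastAtMost_1_4 by auto
    then show False
      using twice by simp
  qed
  moreover have "{j 3, k 3} \<noteq> {j 1, k 1}" "{j 3, k 3} \<noteq> {j 2, k 2}"
    using new by (simp_all add: ball_atLeastAtMost_1_4)
  ultimately show ?thesis
    using disjoint12 by (simp add: crossed_layers_def)
qed

lemma crossed_layers_imp_conditions:
  fixes j k :: "nat \<Rightarrow> 4"
  assumes distinct: "\<forall>i\<in>{1..4::nat}. j i \<noteq> k i" and crossed: "crossed_layers j k"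
  shows "\<forall>m::4. card {i\<in>{1..4::nat}. m = j i \<or> m = k i} = 2"
    and "\<forall>i\<in>{1..4::nat}. (\<exists>i'\<in>{1..<i}. {j i, k i} \<inter> {j i', k i'} \<noteq> {}) \<longrightarrow>
        (\<forall>m::4. \<exists>i'\<in>{1..<i}. m = j i' \<or> m = k i')"
    and "\<forall>i\<in>{1..4::nat}. \<forall>i'\<in>{1..4::nat}. i \<noteq> i' \<longrightarrow> {j i, k i} \<noteq> {j i', k i'}"
proof -
  have d: "j 1 \<noteq> k 1" "j 2 \<noteq> k 2" "j 3 \<noteq> k 3" "j 4 \<noteq> k 4"
    using distinct by auto
  have disjoint: "{j 1, k 1} \<inter> {j 2, k 2} = {}" "{j 3, k 3} \<inter> {j 4, k 4} = {}"
    and new: "{j 3, k 3} \<noteq> {j 1, k 1}" "{j 3, k 3} \<noteq> {j 2, k 2}"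
    using crossed unfolding crossed_layers_def by auto
  note compl = disjoint_pair_eq_Compl[OF d(1,2) disjoint(1)]
    disjoint_pair_eq_Compl[OF d(3,4) disjoint(2)]
  have "(m \<in> {j 1, k 1}) \<noteq> (m \<in> {j 2, k 2})" "(m \<in> {j 3, k 3}) \<noteq> (m \<in> {j 4, k 4})" for m
    using compl by auto
  then show "\<forall>m::4. card {i\<in>{1..4::nat}. m = j i \<or> m = k i} = 2"
    unfolding card_filter_atLeastAtMost_1_4 by auto
  have "\<forall>m::4. m \<in> {j 1, k 1} \<or> m \<in> {j 2, k 2}"
    using compl(1) by blast
  then show "\<forall>i\<in>{1..4::nat}. (\<exists>i'\<in>{1..<i}. {j i, k i} \<inter> {j i', k i'} \<noteq> {}) \<longrightarrow>
      (\<forall>m::4. \<exists>i'\<in>{1..<i}. m = j i' \<or> m = k i')"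
    unfolding ball_atLeastAtMost_1_4 atLeastLessThan_1_upto_4 using disjoint(1) by auto
  have "{j 4, k 4} \<noteq> {j 1, k 1}" "{j 4, k 4} \<noteq> {j 2, k 2}"
    using new compl by (metis double_compl)+
  moreover have "{j 1, k 1} \<noteq> {j 2, k 2}" "{j 3, k 3} \<noteq> {j 4, k 4}"
    using disjoint by auto
  ultimately show "\<forall>i\<in>{1..4::nat}. \<forall>i'\<in>{1..4::nat}. i \<noteq> i' \<longrightarrow> {j i, k i} \<noteq> {j i', k i'}"
    unfolding ball_atLeastAtMost_1_4 using new by metis
qed

theorem theorem2:
  fixes j k :: "nat \<Rightarrow> 4"
  assumes distinct: "\<forall>i\<in>{1..4::nat}. j i \<noteq> k i"
  shows "real_balanced_four_splitter (network_matrix j k) \<longleftrightarrow>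
    (\<forall>m::4. card {i\<in>{1..4::nat}. m = j i \<or> m = k i} = 2) \<and>
    (\<forall>i\<in>{1..4::nat}. (\<exists>i'\<in>{1..<i}. {j i, k i} \<inter> {j i', k i'} \<noteq> {}) \<longrightarrow>
        (\<forall>m::4. \<exists>i'\<in>{1..<i}. m = j i' \<or> m = k i')) \<and>
    (\<forall>i\<in>{1..4::nat}. \<forall>i'\<in>{1..4::nat}. i \<noteq> i' \<longrightarrow> {j i, k i} \<noteq> {j i', k i'})"
  using balanced_imp_crossed_layers[OF distinct] crossed_layers_imp_balanced[OF distinct]
    conditions_imp_crossed_layers[OF distinct] crossed_layers_imp_conditions[OF distinct]
  by blast

end
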